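(* Let $K\ge 2$, let $m_1<\cdots<m_K$ be pairwise co-prime positive integers, $M$ a positive integer and $M_k=Mm_k$. Let $N_1,N_2$ be nonnegative integers, $r_{l,k}=\langle N_l\rangle_{M_k}$, $r_l^c=\langle N_l\rangle_M$, and let $\tilde r_{l,k}=r_{l,k}+\Delta r_{l,k}$ ($l=1,2$, $k=1,\ldots,K$) with integer errors $\Delta r_{l,k}$. Let $\tau=\max_{l,k}|\Delta r_{l,k}|$ and $\tilde r^c_{l,k}=\langle\tilde r_{l,k}\rangle_M$. List the $2K$ numbers $\tilde r^c_{l,k}$ ($l=1,2$, $k=1,\ldots,K$, counted with multiplicity) in nondecreasing order as $s_1\le s_2\le\cdots\le s_{2K}$, and define $D_k=s_{k+1}-s_k$ for $k=1,\ldots,2K-1$ and $D_{2K}=s_1-s_{2K}+M$. If $\tau<M/8$, then there exists one and only one index $k_0\in\{1,\ldots,K\}$ with $$D_{k_0}+D_{k_0+K}>M/2.$$ Moreover, define the multisets $\Omega_1=\{s_{k_0+1},\ldots,s_{k_0+K}\}$ and $$\Omega_2=\begin{cases}\{s_1,\ldots,s_K\}, & k_0=K,\\ \{s_{k_0+K+1}-M,\ldots,s_{2K}-M,\ s_1,\ldots,s_{k_0}\}, & k_0\ne K.\end{cases}$$ Then $\max\Omega_1-\min\Omega_1\le 2\tau$ and $\max\Omega_2-\min\Omega_2\le 2\tau$.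
   Context: For a positive integer $n$ and an integer $x$ (possibly negative), $\langle x\rangle_n$ denotes the remainder of $x$ modulo $n$, i.e. the unique element of $\{0,\ldots,n-1\}$ congruent to $x$ modulo $n$. Note $\sum_{k=1}^{2K}D_k=M$ and all $D_k\ge 0$. *)

theory Defs
  imports Main "HOL-Computational_Algebra.Primes"
begin

definition rc :: "nat \<Rightarrow> (nat \<Rightarrow> nat) \<Rightarrow> (nat \<Rightarrow> nat) \<Rightarrow> (nat \<Rightarrow> nat \<Rightarrow> int) \<Rightarrow> nat \<Rightarrow> nat \<Rightarrow> int" where
  "rc M m N dr l k = (int (N l mod (M * m k)) + dr l k) mod int M"

text \<open>The sorted sequence s_1 <= ... <= s_{2K} (1-based indexing).\<close>
definition sseq :: "nat \<Rightarrow> nat \<Rightarrow> (nat \<Rightarrow> nat) \<Rightarrow> (nat \<Rightarrow> nat) \<Rightarrow> (nat \<Rightarrow> nat \<Rightarrow> int) \<Rightarrow> nat \<Rightarrow> int" where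
  "sseq K M m N dr i = sort [rc M m N dr l k. l \<leftarrow> [1,2], k \<leftarrow> [1..<K+1]] ! (i - 1)"

definition Dgap :: "nat \<Rightarrow> nat \<Rightarrow> (nat \<Rightarrow> int) \<Rightarrow> nat \<Rightarrow> int" where
  "Dgap K M s k = (if k = 2*K then s 1 - s (2*K) + int M else s (k+1) - s k)"

end

theory Submission
  imports Defs "HOL-Library.Multiset"
begin

text \<open>Each group of K corrupted residues lies on an arc of length 2\<tau> of the circle of
  circumference M centred at N_l. Continue the sorted values periodically, g (i + 2K) = g i + M.
  Cutting the circle at the start of one arc and counting how many lifted values fall below each
  arc shows that for some k the block of K terms starting at k and the block of the next K terms
  both have spread at most 2\<tau>; these blocks are \<Omega>_1 and \<Omega>_2. For every k the gaps D_k,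
  D_(k+K) and the spreads of the two blocks at k telescope to M, so this k has
  D_k + D_(k+K) \<ge> M - 4\<tau> > M/2. If k < k', the gaps D_k and D_(k+K) lie inside the two blocks
  at k', so D_k + D_(k+K) + D_k' + D_(k'+K) \<le> M; hence no second k qualifies.\<close>

lemma sorted_dropWhile_not:
  fixes t :: "'a::linorder list"
  assumes "sorted t" and down: "\<And>x y. x \<le> y \<Longrightarrow> P y \<Longrightarrow> P x"
    and "x \<in> set (dropWhile P t)"
  shows "\<not> P x"
proof -
  obtain y ys where y: "dropWhile P t = y # ys"
    using assms(3) by (cases "dropWhile P t") auto
  then have "t = takeWhile P t @ y # ys" "\<not> P y"
    by (simp_all add: dropWhile_eq_Cons_conv)
  then have "y \<le> x"
    using assms(1,3) y by (metis order.refl set_ConsD sorted_append sorted_simps(2))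
  then show ?thesis using down \<open>\<not> P y\<close> by blast
qed

lemma sorted_filter_eq_takeWhile:
  fixes t :: "'a::linorder list"
  assumes "sorted t" and "\<And>x y. x \<le> y \<Longrightarrow> P y \<Longrightarrow> P x"
  shows "filter P t = takeWhile P t"
  using assms by (metis sorted_dropWhile_not takeWhile_eq_filter)

lemma sorted_nth_le_of_length_filter:
  fixes t :: "'a::linorder list"
  assumes "sorted t" "0 < k" "k \<le> length (filter (\<lambda>x. x \<le> c) t)"
  shows "t ! (k - 1) \<le> c"
proof -
  have tw: "filter (\<lambda>x. x \<le> c) t = takeWhile (\<lambda>x. x \<le> c) t"
    using assms(1) by (rule sorted_filter_eq_takeWhile) auto
  then have "k - 1 < length (takeWhile (\<lambda>x. x \<le> c) t)" using assms(2,3) by simp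
  then show ?thesis by (metis nth_mem set_takeWhileD takeWhile_nth)
qed

lemma sorted_nth_ge_of_length_filter:
  fixes t :: "'a::linorder list"
  assumes "sorted t" "k < length t" "length (filter (\<lambda>x. x < b) t) \<le> k"
  shows "b \<le> t ! k"
proof -
  let ?n = "length (takeWhile (\<lambda>x. x < b) t)"
  have "filter (\<lambda>x. x < b) t = takeWhile (\<lambda>x. x < b) t"
    using assms(1) by (rule sorted_filter_eq_takeWhile) auto
  then have "?n \<le> k" using assms(3) by simp
  moreover have "?n < length t" using \<open>?n \<le> k\<close> assms(2) by simp
  then have "\<not> t ! ?n < b" by (rule nth_length_takeWhile)
  moreover have "t ! ?n \<le> t ! k" using assms(1) \<open>?n \<le> k\<close> assms(2) by (rule sorted_nth_mono)
  ultimately show ?thesis by simp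
qed

text \<open>Zero-based: the list [s_1, ..., s_n] continued as s_1, ..., s_n, s_1 + M, ..., s_n + M, s_1 + 2M, ...\<close>

definition cyclic_ext :: "int \<Rightarrow> int list \<Rightarrow> nat \<Rightarrow> int" where
  "cyclic_ext M S i = S ! (i mod length S) + M * int (i div length S)"

lemma cyclic_ext_nth: "i < length S \<Longrightarrow> cyclic_ext M S i = S ! i"
  by (simp add: cyclic_ext_def)

lemma cyclic_ext_add_length:
  "S \<noteq> [] \<Longrightarrow> cyclic_ext M S (i + length S) = cyclic_ext M S i + M"
  by (simp add: cyclic_ext_def algebra_simps div_add_self2)

lemma mono_cyclic_ext:
  assumes "sorted S" "S \<noteq> []" "\<forall>x\<in>set S. 0 \<le> x \<and> x < M"
  shows "mono (cyclic_ext M S)"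
proof (rule mono_iff_le_Suc[THEN iffD2], intro allI)
  fix i
  let ?L = "length S" and ?r = "i mod length S"
  have r: "?r < ?L" using assms(2) by simp
  show "cyclic_ext M S i \<le> cyclic_ext M S (Suc i)"
  proof (cases "Suc ?r = ?L")
    case True
    have "S ! ?r < M" "0 \<le> S ! 0" using assms(2,3) r by (auto intro!: nth_mem)
    with True show ?thesis by (simp add: cyclic_ext_def mod_Suc div_Suc algebra_simps)
  next
    case False
    then have "S ! ?r \<le> S ! Suc ?r" using assms(1) r by (intro sorted_nth_mono) auto
    with False show ?thesis by (simp add: cyclic_ext_def mod_Suc div_Suc)
  qed
qed

lemma map_cyclic_ext_rotate:
  assumes "n \<le> length S"
  shows "map (cyclic_ext M S) [n..<n + length S] = drop n S @ map (\<lambda>x. x + M) (take n S)"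
proof (rule nth_equalityI)
  fix j assume "j < length (map (cyclic_ext M S) [n..<n + length S])"
  then have j: "j < length S" by simp
  show "map (cyclic_ext M S) [n..<n + length S] ! j = (drop n S @ map (\<lambda>x. x + M) (take n S)) ! j"
  proof (cases "n + j < length S")
    case True
    then show ?thesis using j by (simp add: cyclic_ext_nth nth_append less_diff_conv add.commute)
  next
    case False
    then have "S \<noteq> []" "n + j = (n + j - length S) + length S" "n + j - length S < length S"
      using j assms by auto
    then have "cyclic_ext M S (n + j) = S ! (n + j - length S) + M"
      by (metis cyclic_ext_add_length cyclic_ext_nth)
    moreover have "\<not> j < length S - n" "j - (length S - n) = n + j - length S" "n + j - length S < n"
      using False j assms by auto
    ultimately show ?thesis using j by (simp add: nth_append)
  qed
qed (use assms in simp)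

text \<open>Cutting the circle at a: the n-th term of the continuation is the first one \<ge> a, and the
  next length S terms are the lifts of the elements of S to [a, a + M).\<close>

lemma mset_map_cyclic_ext_lift:
  assumes "sorted S" "\<forall>x\<in>set S. 0 \<le> x \<and> x < M" "0 \<le> a" "a < M"
    and n: "n = length (takeWhile (\<lambda>x. x < a) S)"
  shows "mset (map (cyclic_ext M S) [n..<n + length S]) = mset (map (\<lambda>x. a + (x - a) mod M) S)"
proof -
  let ?lift = "\<lambda>x. a + (x - a) mod M"
  have "map ?lift (takeWhile (\<lambda>x. x < a) S) = map (\<lambda>x. x + M) (take n S)"
  proof -
    have "?lift x = x + M" if "x \<in> set (takeWhile (\<lambda>x. x < a) S)" for x
    proof -
      have "0 \<le> x" "x < a" using that assms(2) by (auto dest: set_takeWhileD)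
      have "(x - a) mod M = (x - a + M) mod M" by simp
      also have "\<dots> = x - a + M" by (rule mod_pos_pos_trivial) (use \<open>0 \<le> x\<close> \<open>x < a\<close> assms(4) in auto)
      finally show ?thesis by simp
    qed
    then show ?thesis by (simp add: n takeWhile_eq_take[symmetric])
  qed
  moreover have "map ?lift (dropWhile (\<lambda>x. x < a) S) = drop n S"
  proof -
    have "?lift x = x" if "x \<in> set (dropWhile (\<lambda>x. x < a) S)" for x
    proof -
      have "a \<le> x" using sorted_dropWhile_not[OF assms(1) _ that] by force
      moreover have "x < M" using that assms(2) by (auto dest: set_dropWhileD)
      ultimately show ?thesis using assms(3) by (simp add: mod_pos_pos_trivial)
    qed
    then show ?thesis by (simp add: n dropWhile_eq_drop[symmetric] map_idI)
  qed
  moreover have "n \<le> length S" using n length_takeWhile_le by simp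
  ultimately have "map ?lift S = map (\<lambda>x. x + M) (take n S) @ drop n S"
    by (metis map_append takeWhile_dropWhile_id)
  then show ?thesis
    using map_cyclic_ext_rotate[OF \<open>n \<le> length S\<close>, of M] by (simp add: add.commute)
qed

definition blocks_within :: "(nat \<Rightarrow> int) \<Rightarrow> nat \<Rightarrow> int \<Rightarrow> nat \<Rightarrow> bool" where
  "blocks_within g K w j \<longleftrightarrow> g (j + K - 1) - g j \<le> w \<and> g (j + 2*K - 1) - g (j + K) \<le> w"

lemma blocks_within_add_half_period:
  assumes "1 \<le> K" and per: "\<And>i. g (i + 2*K) = g i + c"
  shows "blocks_within g K w (j + K) \<longleftrightarrow> blocks_within g K w j"
proof -
  have "j + K + K - 1 = j + 2*K - 1" "j + K + 2*K - 1 = (j + K - 1) + 2*K" "j + K + K = j + 2*K"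
    using assms(1) by auto
  then have e: "g (j + K + K - 1) = g (j + 2*K - 1)" "g (j + K + 2*K - 1) = g (j + K - 1) + c"
      "g (j + K + K) = g j + c"
    by (simp_all only: per)
  show ?thesis unfolding blocks_within_def e by auto
qed

lemma blocks_within_first_half:
  assumes "1 \<le> K" "\<And>i. g (i + 2*K) = g i + c" "n \<le> 2*K" "blocks_within g K w n"
  shows "\<exists>k\<in>{1..K}. blocks_within g K w k"
proof -
  consider "n = 0" | "1 \<le> n" "n \<le> K" | "K < n" by linarith
  then show ?thesis
  proof cases
    case 1
    then show ?thesis using assms blocks_within_add_half_period[where g=g and c=c, OF assms(1,2), of w 0] by auto
  next
    case 2
    then show ?thesis using assms(4) by auto
  next
    case 3
    then have "blocks_within g K w (n - K)"
      using assms blocks_within_add_half_period[where g=g and c=c, OF assms(1,2), of w "n - K"] by simp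
    then show ?thesis using 3 assms(3) by (intro bexI[of _ "n - K"]) auto
  qed
qed

lemma sorted_halves_spread_le:
  fixes t xs ys :: "int list"
  assumes "sorted t" "mset t = mset xs + mset ys" "length xs = K" "length ys = K" "1 \<le> K"
    and xs: "\<forall>x\<in>set xs. a \<le> x \<and> x \<le> a + w"
    and ys: "\<forall>y\<in>set ys. b \<le> y \<and> y \<le> b + w" and "a \<le> b"
  shows "t ! (K - 1) - t ! 0 \<le> w \<and> t ! (2*K - 1) - t ! K \<le> w"
proof -
  have count_t: "length (filter P t) = length (filter P xs) + length (filter P ys)" for P
    using assms(2) by (metis filter_append length_append mset_append mset_eq_length mset_filter)
  have len_t: "length t = 2*K" using count_t[of "\<lambda>_. True"] assms(3,4) by simp
  have range_t: "a \<le> x \<and> x \<le> b + w" if "x \<in> set t" for x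
  proof -
    have "x \<in> set xs \<union> set ys" using that assms(2) by (metis mset_append mset_eq_setD set_append)
    then show ?thesis using xs ys \<open>a \<le> b\<close> by (force intro: order_trans)
  qed
  have "t ! 0 \<in> set t" "t ! (2*K - 1) \<in> set t" using len_t assms(5) by (auto intro!: nth_mem)
  then have "a \<le> t ! 0" "t ! (2*K - 1) \<le> b + w" using range_t by auto
  moreover have "t ! (K - 1) \<le> a + w"
  proof (rule sorted_nth_le_of_length_filter[OF \<open>sorted t\<close>])
    have "filter (\<lambda>x. x \<le> a + w) xs = xs" using xs by (simp add: filter_id_conv)
    then show "K \<le> length (filter (\<lambda>x. x \<le> a + w) t)"
      using count_t[of "\<lambda>x. x \<le> a + w"] assms(3) by simp
  qed (use assms(5) in simp)
  moreover have "b \<le> t ! K"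
  proof (rule sorted_nth_ge_of_length_filter[OF \<open>sorted t\<close>])
    have "filter (\<lambda>x. x < b) ys = []" using ys by (force simp: filter_empty_conv)
    then show "length (filter (\<lambda>x. x < b) t) \<le> K"
      using count_t[of "\<lambda>x. x < b"] assms(3) length_filter_le[of _ xs] by simp
  qed (use len_t assms(5) in simp)
  ultimately show ?thesis by linarith
qed

lemma blocks_within_two_arcs:
  fixes S ys zs :: "int list" and M a d w :: int
  assumes S: "sorted S" "mset S = mset (ys @ zs)" "\<forall>x\<in>set S. 0 \<le> x \<and> x < M"
    and len: "length ys = K" "length zs = K" "1 \<le> K"
    and a: "0 \<le> a" "a < M" and d: "0 \<le> d" "d + w < M"
    and ys: "\<forall>y\<in>set ys. (y - a) mod M \<le> w"
    and zs: "\<forall>z\<in>set zs. d \<le> (z - a) mod M \<and> (z - a) mod M \<le> d + w"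
  shows "\<exists>n\<le>2*K. blocks_within (cyclic_ext M S) K w n"
proof -
  let ?g = "cyclic_ext M S" and ?lift = "\<lambda>x. a + (x - a) mod M"
  define n where "n = length (takeWhile (\<lambda>x. x < a) S)"
  define t where "t = map ?g [n..<n + 2*K]"
  have lenS: "length S = 2*K" using S(2) len by (metis length_append mset_eq_length mult_2)
  then have "S \<noteq> []" using len(3) by auto
  have sorted_t: "sorted t"
    unfolding t_def sorted_map
    by (rule sorted_wrt_mono_rel[OF _ sorted_upt])
       (use mono_cyclic_ext[OF S(1) \<open>S \<noteq> []\<close> S(3)] in \<open>auto dest: monoD\<close>)
  have mset_t: "mset t = mset (map ?lift ys) + mset (map ?lift zs)"
    using mset_map_cyclic_ext_lift[OF S(1,3) a n_def] S(2) lenS by (simp add: t_def)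
  have "0 < M" using a by simp
  then have lift_ys: "\<forall>x\<in>set (map ?lift ys). a \<le> x \<and> x \<le> a + w"
    using ys by simp
  have lift_zs: "\<forall>x\<in>set (map ?lift zs). a + d \<le> x \<and> x \<le> a + d + w"
    using zs by simp
  have halves: "t ! (K - 1) - t ! 0 \<le> w \<and> t ! (2*K - 1) - t ! K \<le> w"
    using sorted_halves_spread_le[OF sorted_t mset_t _ _ len(3) lift_ys lift_zs] len d(1) by simp
  have t_nth: "t ! j = ?g (n + j)" if "j < 2*K" for j
    using that by (simp add: t_def)
  have "t ! 0 = ?g n" "t ! (K - 1) = ?g (n + K - 1)" "t ! K = ?g (n + K)"
    "t ! (2*K - 1) = ?g (n + 2*K - 1)"
    using t_nth[of 0] t_nth[of "K - 1"] t_nth[of K] t_nth[of "2*K - 1"] len(3)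
    by (simp_all add: Nat.add_diff_assoc)
  then have "blocks_within ?g K w n"
    using halves unfolding blocks_within_def by simp
  moreover have "n \<le> 2*K" by (simp add: n_def length_takeWhile_le flip: lenS)
  ultimately show ?thesis by blast
qed

lemma mod_lift_within_arc:
  fixes M b b' e tau :: int
  assumes "0 < M" "\<bar>e\<bar> \<le> tau" "(b' - b) mod M + 2*tau < M"
  shows "(b' - b) mod M \<le> ((b' + e) mod M - (b - tau) mod M) mod M \<and>
    ((b' + e) mod M - (b - tau) mod M) mod M \<le> (b' - b) mod M + 2*tau"
proof -
  have "((b' + e) mod M - (b - tau) mod M) mod M = (b' - b + (e + tau)) mod M"
    by (simp add: mod_diff_eq algebra_simps)
  also have "\<dots> = ((b' - b) mod M + (e + tau)) mod M"
    by (simp add: mod_add_left_eq)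
  also have "\<dots> = (b' - b) mod M + (e + tau)"
    using assms by (intro mod_pos_pos_trivial) auto
  finally show ?thesis using assms(2) by (simp add: abs_le_iff)
qed

lemma blocks_within_ordered_clusters:
  fixes S us vs :: "int list" and M b b' tau :: int
  assumes S: "sorted S" "mset S = mset (us @ vs)" "\<forall>x\<in>set S. 0 \<le> x \<and> x < M"
    and len: "length us = K" "length vs = K" "1 \<le> K" and "0 < M"
    and us: "\<forall>u\<in>set us. \<exists>e. \<bar>e\<bar> \<le> tau \<and> u = (b + e) mod M"
    and vs: "\<forall>v\<in>set vs. \<exists>e. \<bar>e\<bar> \<le> tau \<and> v = (b' + e) mod M"
    and ordered: "(b' - b) mod M + 2*tau < M"
  shows "\<exists>n\<le>2*K. blocks_within (cyclic_ext M S) K (2*tau) n"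
proof (rule blocks_within_two_arcs[OF S len])
  show "0 \<le> (b - tau) mod M" "(b - tau) mod M < M" "0 \<le> (b' - b) mod M"
    using \<open>0 < M\<close> by simp_all
  show "(b' - b) mod M + 2*tau < M" by (fact ordered)
  show "\<forall>u\<in>set us. (u - (b - tau) mod M) mod M \<le> 2*tau"
  proof
    fix u assume "u \<in> set us"
    then obtain e where e: "\<bar>e\<bar> \<le> tau" "u = (b + e) mod M" using us by blast
    have "0 \<le> (b' - b) mod M" using \<open>0 < M\<close> by simp
    then have "(b - b) mod M + 2*tau < M" using ordered by simp
    from mod_lift_within_arc[OF \<open>0 < M\<close> e(1) this]
    show "(u - (b - tau) mod M) mod M \<le> 2*tau" unfolding e(2) by simp
  qed
  show "\<forall>v\<in>set vs. (b' - b) mod M \<le> (v - (b - tau) mod M) mod M \<and>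
      (v - (b - tau) mod M) mod M \<le> (b' - b) mod M + 2*tau"
  proof
    fix v assume "v \<in> set vs"
    then obtain e where e: "\<bar>e\<bar> \<le> tau" "v = (b' + e) mod M" using vs by blast
    from mod_lift_within_arc[OF \<open>0 < M\<close> e(1) ordered]
    show "(b' - b) mod M \<le> (v - (b - tau) mod M) mod M \<and>
        (v - (b - tau) mod M) mod M \<le> (b' - b) mod M + 2*tau" unfolding e(2) .
  qed
qed

lemma blocks_within_two_clusters:
  fixes S ys zs :: "int list" and M c c' tau :: int
  assumes S: "sorted S" "mset S = mset (ys @ zs)" "\<forall>x\<in>set S. 0 \<le> x \<and> x < M"
    and len: "length ys = K" "length zs = K" "1 \<le> K" and "4*tau < M"
    and ys: "\<forall>y\<in>set ys. \<exists>e. \<bar>e\<bar> \<le> tau \<and> y = (c + e) mod M"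
    and zs: "\<forall>z\<in>set zs. \<exists>e. \<bar>e\<bar> \<le> tau \<and> z = (c' + e) mod M"
  shows "\<exists>n\<le>2*K. blocks_within (cyclic_ext M S) K (2*tau) n"
proof -
  have "ys \<noteq> []" using len by auto
  then have "0 \<le> tau" using ys by (metis abs_ge_zero last_in_set order_trans)
  then have "0 < M" using \<open>4*tau < M\<close> by simp
  consider "(c' - c) mod M + 2*tau < M" | "(c - c') mod M + 2*tau < M"
  proof (cases "(c' - c) mod M + 2*tau < M")
    case False
    then have "(c' - c) mod M \<noteq> 0" using \<open>4*tau < M\<close> \<open>0 \<le> tau\<close> by linarith
    then have "(c - c') mod M = M - (c' - c) mod M"
      by (metis minus_diff_eq zmod_zminus1_eq_if)
    then show ?thesis using that False \<open>4*tau < M\<close> by linarith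
  qed
  then show ?thesis
  proof cases
    case 1
    then show ?thesis
      using blocks_within_ordered_clusters[OF S len \<open>0 < M\<close> ys zs] by blast
  next
    case 2
    have "mset S = mset (zs @ ys)" using S(2) by (simp add: add.commute)
    then show ?thesis
      using blocks_within_ordered_clusters[OF S(1) _ S(3) len(2,1,3) \<open>0 < M\<close> zs ys 2] by blast
  qed
qed

lemma mono_diff_le:
  fixes g :: "nat \<Rightarrow> int"
  assumes "mono g" "c \<le> a" "b \<le> d"
  shows "g b - g a \<le> g d - g c"
  using monoD[OF assms(1) assms(2)] monoD[OF assms(1) assms(3)] by linarith

lemma Max_minus_Min_image_atLeastAtMost:
  fixes f :: "nat \<Rightarrow> int"
  assumes "mono f" "a \<le> b"
  shows "Max (f ` {a..b}) - Min (f ` {a..b}) = f b - f a"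
proof -
  have "Max {a..b} = b" "Min {a..b} = a" using assms(2) by (auto intro: Max_eqI Min_eqI)
  then show ?thesis
    using mono_Max_commute[OF assms(1), of "{a..b}"] mono_Min_commute[OF assms(1), of "{a..b}"] assms(2)
    by simp
qed

lemma unique_wide_opposite_gaps:
  fixes g :: "nat \<Rightarrow> int" and M w :: int
  assumes K: "1 \<le> K" and "mono g" and per: "\<And>i. g (i + 2*K) = g i + M"
    and ks: "ks \<in> {1..K}" "blocks_within g K w ks" and "4*w < M"
  shows "{k \<in> {1..K}. M < 2 * (g k - g (k - 1) + (g (k + K) - g (k + K - 1)))} = {ks}"
proof -
  define P where "P k = g k - g (k - 1) + (g (k + K) - g (k + K - 1))" for k
  define W where "W k = g (k + K - 1) - g k + (g (k + 2*K - 1) - g (k + K))" for k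
  have total: "P k + W k = M" if "k \<in> {1..K}" for k
    using per[of "k - 1"] that by (simp add: P_def W_def)
  have dominated: "P k \<le> W k'" if "k \<in> {1..K}" "k' \<in> {1..K}" "k < k'" for k k'
  proof -
    have "g k - g (k - 1) = g (k + 2*K) - g (k - 1 + 2*K)" using per[of k] per[of "k - 1"] by simp
    also have "\<dots> \<le> g (k' + 2*K - 1) - g (k' + K)"
      using that by (intro mono_diff_le[OF \<open>mono g\<close>]) auto
    finally have "g k - g (k - 1) \<le> g (k' + 2*K - 1) - g (k' + K)" .
    moreover have "g (k + K) - g (k + K - 1) \<le> g (k' + K - 1) - g k'"
      using that by (intro mono_diff_le[OF \<open>mono g\<close>]) auto
    ultimately show ?thesis by (simp add: P_def W_def)
  qed
  have "W ks \<le> 2*w" using ks(2) by (simp add: W_def blocks_within_def)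
  then have wide: "M < 2 * P ks" using total[OF ks(1)] \<open>4*w < M\<close> by linarith
  have "k = ks" if "k \<in> {1..K}" "M < 2 * P k" for k
  proof (rule ccontr)
    assume "k \<noteq> ks"
    then consider "k < ks" | "ks < k" by linarith
    then show False
    proof cases
      case 1
      then show ?thesis using dominated[OF that(1) ks(1) 1] \<open>W ks \<le> 2*w\<close> that(2) \<open>4*w < M\<close> by linarith
    next
      case 2
      then show ?thesis using dominated[OF ks(1) that(1) 2] total[OF that(1)] that(2) wide by linarith
    qed
  qed
  then have "{k \<in> {1..K}. M < 2 * P k} = {ks}" using ks(1) wide by blast
  then show ?thesis by (simp only: P_def)
qed

lemma Dgap_eq_diff:
  fixes s g :: "nat \<Rightarrow> int"
  assumes K: "1 \<le> K" and per: "\<And>i. g (i + 2*K) = g i + int M"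
    and s: "\<And>i. i \<in> {1..2*K} \<Longrightarrow> s i = g (i - 1)" and k: "k \<in> {1..2*K}"
  shows "Dgap K M s k = g k - g (k - 1)"
proof (cases "k = 2*K")
  case True
  then show ?thesis using s[of 1] s[of "2*K"] per[of 0] K by (simp add: Dgap_def)
next
  case False
  then show ?thesis using s[of k] s[of "k + 1"] k by (simp add: Dgap_def)
qed

lemma image_atLeastAtMost_pred_index:
  fixes s g :: "nat \<Rightarrow> int" and h :: "int \<Rightarrow> int"
  assumes s: "\<And>i. i \<in> {1..2*K} \<Longrightarrow> s i = g (i - 1)" and "1 \<le> a" "a \<le> b" "b \<le> 2*K"
  shows "(\<lambda>i. h (s i)) ` {a..b} = (\<lambda>i. h (g i)) ` {a - 1..b - 1}"
proof -
  have shift: "{a..b} = (\<lambda>i. i + 1) ` {a - 1..b - 1}" using assms(2,3) by simp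
  have "(\<lambda>i. h (s i)) ` {a..b} = (\<lambda>i. h (s (i + 1))) ` {a - 1..b - 1}"
    by (simp only: shift image_image)
  also have "\<dots> = (\<lambda>i. h (g i)) ` {a - 1..b - 1}"
    using assms by (intro image_cong) (auto simp: s)
  finally show ?thesis .
qed

lemma windows_eq_blocks:
  fixes s g :: "nat \<Rightarrow> int"
  assumes K: "1 \<le> K" and per: "\<And>i. g (i + 2*K) = g i + int M"
    and s: "\<And>i. i \<in> {1..2*K} \<Longrightarrow> s i = g (i - 1)" and k: "k \<in> {1..K}"
  shows "s ` {k+1..k+K} = g ` {k..k + K - 1}"
    and "(if k = K then s ` {1..K} else (\<lambda>i. s i - int M) ` {k+K+1..2*K} \<union> s ` {1..k})
      = (\<lambda>i. g i - int M) ` {k + K..k + 2*K - 1}"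
proof -
  note reindex = image_atLeastAtMost_pred_index[where K = K and s = s and g = g, OF s]
  have unwind: "(\<lambda>i. g i - int M) ` {c + 2*K..d + 2*K} = g ` {c..d}" for c d
  proof -
    have "(\<lambda>i. g i - int M) ` {c + 2*K..d + 2*K} = (\<lambda>i. g (i + 2*K) - int M) ` {c..d}"
      by (simp flip: image_add_atLeastAtMost' add: image_image)
    then show ?thesis by (simp add: per)
  qed
  show "s ` {k+1..k+K} = g ` {k..k + K - 1}"
    using reindex[where a = "k + 1" and b = "k + K" and h = "\<lambda>x. x"] k by simp
  show "(if k = K then s ` {1..K} else (\<lambda>i. s i - int M) ` {k+K+1..2*K} \<union> s ` {1..k})
      = (\<lambda>i. g i - int M) ` {k + K..k + 2*K - 1}"
  proof (cases "k = K")
    case True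
    have "s ` {1..K} = g ` {0..K - 1}" using reindex[where a = "1" and b = "K" and h = "\<lambda>x. x"] K by simp
    also have "\<dots> = (\<lambda>i. g i - int M) ` {0 + 2*K..K - 1 + 2*K}" by (rule unwind[symmetric])
    also have "{0 + 2*K..K - 1 + 2*K} = {k + K..k + 2*K - 1}" using True K by auto
    finally show ?thesis using True by simp
  next
    case False
    have "(\<lambda>i. s i - int M) ` {k+K+1..2*K} = (\<lambda>i. g i - int M) ` {k + K..2*K - 1}"
      using reindex[where a = "k+K+1" and b = "2*K" and h = "\<lambda>x. x - int M"] k False by simp
    moreover have "s ` {1..k} = (\<lambda>i. g i - int M) ` {2*K..k + 2*K - 1}"
      using reindex[where a = "1" and b = "k" and h = "\<lambda>x. x"] unwind[of 0 "k - 1"] k by (simp add: algebra_simps)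
    moreover have "{k + K..2*K - 1} \<union> {2*K..k + 2*K - 1} = {k + K..k + 2*K - 1}"
      using k False by auto
    ultimately show ?thesis using False by (simp flip: image_Un)
  qed
qed

lemma Dgap_unique_wide_pair:
  fixes s g :: "nat \<Rightarrow> int" and K M :: nat and tau :: int
  assumes K: "1 \<le> K" and g: "mono g" and per: "\<And>i. g (i + 2*K) = g i + int M"
    and s: "\<And>i. i \<in> {1..2*K} \<Longrightarrow> s i = g (i - 1)"
    and ks: "ks \<in> {1..K}" "blocks_within g K (2*tau) ks" and "8*tau < int M"
  shows "(\<exists>!k0. k0 \<in> {1..K} \<and> 2 * (Dgap K M s k0 + Dgap K M s (k0 + K)) > int M) \<and>
    (\<forall>k0\<in>{1..K}. 2 * (Dgap K M s k0 + Dgap K M s (k0 + K)) > int M \<longrightarrow>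
       (let O1 = s ` {k0+1..k0+K};
            O2 = (if k0 = K then s ` {1..K}
                  else (\<lambda>i. s i - int M) ` {k0+K+1..2*K} \<union> s ` {1..k0})
        in Max O1 - Min O1 \<le> 2 * tau \<and> Max O2 - Min O2 \<le> 2 * tau))"
proof -
  have gap_pair: "Dgap K M s k + Dgap K M s (k + K) = g k - g (k - 1) + (g (k + K) - g (k + K - 1))"
    if "k \<in> {1..K}" for k
    using Dgap_eq_diff[OF K per s, of k] Dgap_eq_diff[OF K per s, of "k + K"] that by simp
  have wide_set: "{k \<in> {1..K}. int M < 2 * (g k - g (k - 1) + (g (k + K) - g (k + K - 1)))} = {ks}"
    using \<open>8*tau < int M\<close> by (intro unique_wide_opposite_gaps[OF K g per ks]) simp
  have wide_iff: "k \<in> {1..K} \<and> int M < 2 * (Dgap K M s k + Dgap K M s (k + K)) \<longleftrightarrow> k = ks" for k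
  proof -
    have "k \<in> {1..K} \<and> int M < 2 * (Dgap K M s k + Dgap K M s (k + K)) \<longleftrightarrow>
        k \<in> {k \<in> {1..K}. int M < 2 * (g k - g (k - 1) + (g (k + K) - g (k + K - 1)))}"
      using gap_pair[of k] by auto
    then show ?thesis using wide_set by blast
  qed
  have O1: "s ` {k+1..k+K} = g ` {k..k + K - 1}" if "k \<in> {1..K}" for k
    using windows_eq_blocks(1)[OF K per s that] .
  have O2: "(if k = K then s ` {1..K} else (\<lambda>i. s i - int M) ` {k+K+1..2*K} \<union> s ` {1..k})
      = (\<lambda>i. g i - int M) ` {k + K..k + 2*K - 1}" if "k \<in> {1..K}" for k
    using windows_eq_blocks(2)[OF K per s that] .
  have g_shift: "mono (\<lambda>i. g i - int M)" using g by (simp add: mono_def)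
  have widths: "Max (s ` {k+1..k+K}) - Min (s ` {k+1..k+K}) = g (k + K - 1) - g k
      \<and> Max (if k = K then s ` {1..K} else (\<lambda>i. s i - int M) ` {k+K+1..2*K} \<union> s ` {1..k})
        - Min (if k = K then s ` {1..K} else (\<lambda>i. s i - int M) ` {k+K+1..2*K} \<union> s ` {1..k})
        = g (k + 2*K - 1) - g (k + K)" if "k \<in> {1..K}" for k
    unfolding O1[OF that] O2[OF that]
    using Max_minus_Min_image_atLeastAtMost[OF g, of k "k + K - 1"]
      Max_minus_Min_image_atLeastAtMost[OF g_shift, of "k + K" "k + 2*K - 1"] K
    by simp
  show ?thesis
  proof
    show "\<exists>!k0. k0 \<in> {1..K} \<and> 2 * (Dgap K M s k0 + Dgap K M s (k0 + K)) > int M"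
      unfolding wide_iff by simp
    show "\<forall>k0\<in>{1..K}. 2 * (Dgap K M s k0 + Dgap K M s (k0 + K)) > int M \<longrightarrow>
       (let O1 = s ` {k0+1..k0+K};
            O2 = (if k0 = K then s ` {1..K}
                  else (\<lambda>i. s i - int M) ` {k0+K+1..2*K} \<union> s ` {1..k0})
        in Max O1 - Min O1 \<le> 2 * tau \<and> Max O2 - Min O2 \<le> 2 * tau)"
    proof (intro ballI impI)
      fix k0 assume "k0 \<in> {1..K}" "2 * (Dgap K M s k0 + Dgap K M s (k0 + K)) > int M"
      then have "k0 = ks" using wide_iff by blast
      then show "let O1 = s ` {k0+1..k0+K};
            O2 = (if k0 = K then s ` {1..K}
                  else (\<lambda>i. s i - int M) ` {k0+K+1..2*K} \<union> s ` {1..k0})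
        in Max O1 - Min O1 \<le> 2 * tau \<and> Max O2 - Min O2 \<le> 2 * tau"
        using widths[OF \<open>k0 \<in> {1..K}\<close>] ks(2) unfolding Let_def blocks_within_def by simp
    qed
  qed
qed

text \<open>Reducing mod M m_k and then mod M is reducing mod M.\<close>

lemma rc_eq_mod: "rc M m N dr l k = (int (N l) + dr l k) mod int M"
proof -
  have "int (N l mod (M * m k)) mod int M = int (N l) mod int M"
    by (metis dvd_triv_left mod_mod_cancel of_nat_mod)
  then show ?thesis unfolding rc_def by (metis mod_add_left_eq)
qed

lemma rc_near_centre:
  assumes "\<And>k. k \<in> {1..K} \<Longrightarrow> \<bar>dr l k\<bar> \<le> tau"
  shows "\<forall>x\<in>set (map (rc M m N dr l) [1..<K+1]). \<exists>e. \<bar>e\<bar> \<le> tau \<and> x = (int (N l) + e) mod int M"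
proof
  fix x assume "x \<in> set (map (rc M m N dr l) [1..<K+1])"
  moreover have "set [1..<K+1] = {1..K}" by auto
  ultimately have "x \<in> rc M m N dr l ` {1..K}" by (simp only: set_map)
  then obtain k where "k \<in> {1..K}" "x = rc M m N dr l k" by blast
  then show "\<exists>e. \<bar>e\<bar> \<le> tau \<and> x = (int (N l) + e) mod int M"
    using assms by (intro exI[of _ "dr l k"]) (simp add: rc_eq_mod)
qed

lemma sseq_blocks_within:
  assumes K: "1 \<le> K" and "0 < M" and "4 * tau < int M"
    and dr: "\<And>l k. l \<in> {1,2} \<Longrightarrow> k \<in> {1..K} \<Longrightarrow> \<bar>dr l k\<bar> \<le> tau"
  obtains g ks where "mono g" "\<And>i. g (i + 2*K) = g i + int M"
    "\<And>i. i \<in> {1..2*K} \<Longrightarrow> sseq K M m N dr i = g (i - 1)"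
    "ks \<in> {1..K}" "blocks_within g K (2*tau) ks"
proof -
  define residues where "residues l = map (rc M m N dr l) [1..<K+1]" for l
  define S where "S = sort (residues 1 @ residues 2)"
  have near: "\<forall>x\<in>set (residues l). \<exists>e. \<bar>e\<bar> \<le> tau \<and> x = (int (N l) + e) mod int M"
    if "l \<in> {1,2}" for l
    unfolding residues_def using dr[OF that] by (rule rc_near_centre)
  have range: "\<forall>x\<in>set S. 0 \<le> x \<and> x < int M"
  proof
    fix x assume "x \<in> set S"
    then obtain l where "l \<in> {1,2}" "x \<in> set (residues l)" by (auto simp: S_def)
    then obtain e where "x = (int (N l) + e) mod int M" using near by blast
    then show "0 \<le> x \<and> x < int M" using \<open>0 < M\<close> by simp
  qed
  have S: "sorted S" "mset S = mset (residues 1 @ residues 2)" "\<forall>x\<in>set S. 0 \<le> x \<and> x < int M"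
    using range by (simp_all add: S_def)
  have len: "length (residues l) = K" for l by (simp add: residues_def)
  then have "length S = 2*K" by (simp add: S_def)
  then have "S \<noteq> []" using K by auto
  then have per: "cyclic_ext (int M) S (i + 2*K) = cyclic_ext (int M) S i + int M" for i
    using cyclic_ext_add_length[of S "int M" i] \<open>length S = 2*K\<close> by simp
  obtain n where "n \<le> 2*K" "blocks_within (cyclic_ext (int M) S) K (2*tau) n"
    using blocks_within_two_clusters[OF S len len K \<open>4 * tau < int M\<close> near near] by blast
  then obtain ks where "ks \<in> {1..K}" "blocks_within (cyclic_ext (int M) S) K (2*tau) ks"
    using blocks_within_first_half[where g = "cyclic_ext (int M) S", OF K per] by blast
  moreover have "sseq K M m N dr i = cyclic_ext (int M) S (i - 1)" if "i \<in> {1..2*K}" for i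
  proof -
    have "i - 1 < length S" using that \<open>length S = 2*K\<close> by auto
    then show ?thesis by (simp add: sseq_def S_def residues_def cyclic_ext_nth)
  qed
  moreover have "mono (cyclic_ext (int M) S)"
    using S(1) \<open>S \<noteq> []\<close> S(3) by (rule mono_cyclic_ext)
  ultimately show ?thesis using that per by blast
qed

theorem lemma2:
  fixes K M :: nat and m N :: "nat \<Rightarrow> nat" and dr :: "nat \<Rightarrow> nat \<Rightarrow> int"
  assumes "K \<ge> 2" and "M > 0"
    and "\<forall>k\<in>{1..K}. m k > 0"
    and "\<forall>i\<in>{1..K}. \<forall>j\<in>{1..K}. i < j \<longrightarrow> m i < m j"
    and "\<forall>i\<in>{1..K}. \<forall>j\<in>{1..K}. i \<noteq> j \<longrightarrow> coprime (m i) (m j)"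
    and "8 * Max {\<bar>dr l k\<bar> | l k. l \<in> {1,2} \<and> k \<in> {1..K}} < int M"
  shows "let tau = Max {\<bar>dr l k\<bar> | l k. l \<in> {1,2} \<and> k \<in> {1..K}};
             s = sseq K M m N dr;
             D = Dgap K M s
         in (\<exists>!k0. k0 \<in> {1..K} \<and> 2 * (D k0 + D (k0 + K)) > int M) \<and>
            (\<forall>k0\<in>{1..K}. 2 * (D k0 + D (k0 + K)) > int M \<longrightarrow>
               (let O1 = s ` {k0+1..k0+K};
                    O2 = (if k0 = K then s ` {1..K}
                          else (\<lambda>i. s i - int M) ` {k0+K+1..2*K} \<union> s ` {1..k0})
                in Max O1 - Min O1 \<le> 2 * tau \<and> Max O2 - Min O2 \<le> 2 * tau))"
proof -
  define tau where "tau = Max {\<bar>dr l k\<bar> | l k. l \<in> {1,2} \<and> k \<in> {1..K}}"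
  have K: "1 \<le> K" using assms(1) by simp
  have tau_bound: "\<bar>dr l k\<bar> \<le> tau" if "l \<in> {1,2}" "k \<in> {1..K}" for l k
    unfolding tau_def by (rule Max_ge) (use that in \<open>auto intro: finite_image_set2\<close>)
  have "8 * tau < int M" using assms(6) by (simp add: tau_def)
  moreover have "\<bar>dr 1 1\<bar> \<le> tau" using tau_bound K by simp
  ultimately have "4 * tau < int M" by linarith
  obtain g ks where "mono g" "\<And>i. g (i + 2*K) = g i + int M"
      "\<And>i. i \<in> {1..2*K} \<Longrightarrow> sseq K M m N dr i = g (i - 1)"
      "ks \<in> {1..K}" "blocks_within g K (2*tau) ks"
    using sseq_blocks_within[where dr = dr and m = m and N = N, OF K \<open>M > 0\<close> \<open>4 * tau < int M\<close> tau_bound] by blast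
  from Dgap_unique_wide_pair[OF K this \<open>8 * tau < int M\<close>]
  show ?thesis unfolding Let_def tau_def .
qed

end
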